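(* Let $L,R$ be positive integers and let $p=p_{-L}\cdots p_{-1}\,X\,p_1\cdots p_R$ be an injective pattern. Let $f:\{0,1\}^{L+R+1}\to\{0,1\}$ be the injective pattern-induced rule of $p$, i.e. $f(a_{-L},\dots,a_0,\dots,a_R)=1-a_0$ if $a_i=p_i$ for all $i\in\{-L,\dots,R\}\setminus\{0\}$, and $f(a_{-L},\dots,a_R)=a_0$ otherwise. Then the global transformation $\tau:\{0,1\}^{\mathbb{Z}}\to\{0,1\}^{\mathbb{Z}}$, $\tau(c)_n=f(c_{n-L},\dots,c_{n+R})$, is injective.
   Context: Patterns are finite words over the alphabet $\{0,1,X\}$, where $X$ is a wildcard standing for either state $0$ or $1$. Two words $u=u_1\cdots u_\ell$ and $v=v_1\cdots v_\ell$ of the same length over $\{0,1,X\}$ are called equal if for every position $t$ either $u_t=v_t$ or at least one of $u_t,v_t$ is $X$; otherwise they are unequal (i.e. there is a position $t$ with $u_t,v_t\in\{0,1\}$ and $u_t\neq v_t$). For a word $w=w_{-L}\cdots w_{-1}Xw_1\cdots w_R$ with $w_i\in\{0,1\}$ for $i\neq 0$ and the wildcard $X$ in position $0$, its prefix substring of length $\ell$ is $w_{-L}\cdots w_{-L+\ell-1}$ and its suffix substring of length $\ell$ is $w_{R-\ell+1}\cdots w_R$ ($1\le \ell\le L+R$). Such a word is an injective pattern if: when $L\le R$, for every $\ell$ with $L+1\le \ell\le L+R$ (i.e. every prefix substring containing $X$) the prefix substring of length $\ell$ is unequal to the suffix substring of length $\ell$; and when $L>R$, for every $\ell$ with $R+1\le\ell\le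 L+R$ (every suffix substring containing $X$) the suffix substring of length $\ell$ is unequal to the prefix substring of length $\ell$. (For example, for $L=1,R=3$ the injective patterns are $0X011$, $0X110$, $1X001$, $1X100$.) The injective pattern-induced rule flips the centre cell exactly when the neighbourhood matches the pattern (with the centre arbitrary) and leaves it unchanged otherwise. $\tau$ is injective if $c_1\ne c_2$ implies $\tau(c_1)\ne\tau(c_2)$. *)

theory Defs
  imports Main
begin

datatype sym = S0 | S1 | SX

definition words_equal :: "sym list \<Rightarrow> sym list \<Rightarrow> bool" where
  "words_equal u v \<longleftrightarrow> length u = length v \<and>
     (\<forall>t < length u. u ! t = v ! t \<or> u ! t = SX \<or> v ! t = SX)"

text \<open>A word w = w_{-L}..w_{-1} X w_1..w_R is stored as a list of length L+R+1;
  list index k corresponds to position k - L.\<close>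
definition prefix_sub :: "sym list \<Rightarrow> nat \<Rightarrow> sym list" where
  "prefix_sub w l = take l w"

definition suffix_sub :: "sym list \<Rightarrow> nat \<Rightarrow> sym list" where
  "suffix_sub w l = drop (length w - l) w"

definition injective_pattern :: "nat \<Rightarrow> nat \<Rightarrow> sym list \<Rightarrow> bool" where
  "injective_pattern L R w \<longleftrightarrow>
     length w = L + R + 1 \<and> w ! L = SX \<and> (\<forall>k < length w. k \<noteq> L \<longrightarrow> w ! k \<noteq> SX) \<and>
     (if L \<le> R then (\<forall>l \<in> {L+1..L+R}. \<not> words_equal (prefix_sub w l) (suffix_sub w l))
      else (\<forall>l \<in> {R+1..L+R}. \<not> words_equal (suffix_sub w l) (prefix_sub w l)))"

text \<open>Cell state 1 is True, 0 is False.\<close>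
fun sym_matches :: "sym \<Rightarrow> bool \<Rightarrow> bool" where
  "sym_matches S0 b = (\<not> b)"
| "sym_matches S1 b = b"
| "sym_matches SX b = True"

definition pat_at :: "nat \<Rightarrow> sym list \<Rightarrow> int \<Rightarrow> sym" where
  "pat_at L w i = w ! nat (i + int L)"

definition pattern_rule :: "nat \<Rightarrow> nat \<Rightarrow> sym list \<Rightarrow> (int \<Rightarrow> bool) \<Rightarrow> bool" where
  "pattern_rule L R w a =
     (if \<forall>i \<in> {- int L .. int R} - {0}. sym_matches (pat_at L w i) (a i)
      then \<not> a 0 else a 0)"

definition global_map :: "nat \<Rightarrow> nat \<Rightarrow> sym list \<Rightarrow> (int \<Rightarrow> bool) \<Rightarrow> (int \<Rightarrow> bool)" where
  "global_map L R w c = (\<lambda>n. pattern_rule L R w (\<lambda>i. c (n + i)))"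

end

theory Submission
  imports Defs
begin

text \<open>The rule flips cell n exactly when the pattern occurs around n. Two occurrences of an
  injective pattern at distinct positions n < n' with n' - n \<le> max L R would force the prefix of
  length L + R + 1 - (n' - n) of the pattern to be equal (up to wildcards) to the suffix of the
  same length, which the definition forbids. Hence occurrences are never that close; so flipping
  the centre of one occurrence never touches the neighbourhood of another, the occurrences of the
  pattern in \<tau>(c) are exactly those in c, and \<tau> \<circ> \<tau> = id.\<close>

definition pattern_occurs :: "nat \<Rightarrow> nat \<Rightarrow> sym list \<Rightarrow> (int \<Rightarrow> bool) \<Rightarrow> int \<Rightarrow> bool" where
  "pattern_occurs L R p c n \<longleftrightarrow>
     (\<forall>k < L + R + 1. k \<noteq> L \<longrightarrow> sym_matches (p ! k) (c (n + int k - int L)))"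

lemma pattern_occurs_iff_neighbourhood_matches:
  "(\<forall>i \<in> {- int L .. int R} - {0}. sym_matches (pat_at L p i) (c (n + i)))
     \<longleftrightarrow> pattern_occurs L R p c n"
proof
  assume H: "\<forall>i \<in> {- int L .. int R} - {0}. sym_matches (pat_at L p i) (c (n + i))"
  show "pattern_occurs L R p c n" unfolding pattern_occurs_def
  proof (intro allI impI)
    fix k assume "k < L + R + 1" "k \<noteq> L"
    then have "int k - int L \<in> {- int L .. int R} - {0}" by auto
    from H[rule_format, OF this] show "sym_matches (p ! k) (c (n + int k - int L))"
      by (simp add: pat_at_def algebra_simps)
  qed
next
  assume H: "pattern_occurs L R p c n"
  show "\<forall>i \<in> {- int L .. int R} - {0}. sym_matches (pat_at L p i) (c (n + i))"
  proof
    fix i assume i: "i \<in> {- int L .. int R} - {0}"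
    define k where "k = nat (i + int L)"
    have "k < L + R + 1" "k \<noteq> L" "int k = i + int L" using i by (auto simp: k_def)
    with H show "sym_matches (pat_at L p i) (c (n + i))"
      unfolding pattern_occurs_def pat_at_def k_def[symmetric]
      by (metis add_diff_cancel_right' add_diff_eq)
  qed
qed

lemma global_map_eq:
  "global_map L R p c n = (if pattern_occurs L R p c n then \<not> c n else c n)"
  unfolding global_map_def pattern_rule_def pattern_occurs_iff_neighbourhood_matches by simp

lemma sym_matches_same_cell:
  "sym_matches a v \<Longrightarrow> sym_matches b v \<Longrightarrow> a = b \<or> a = SX \<or> b = SX"
  by (cases a; cases b) auto

lemma words_equal_sym: "words_equal u v \<Longrightarrow> words_equal v u"
  unfolding words_equal_def by auto

lemma injective_pattern_no_self_overlap:
  assumes "injective_pattern L R p" and "1 \<le> d" and "d \<le> max L R"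
  shows "\<not> words_equal (take (L + R + 1 - d) p) (drop d p)"
proof -
  define l where "l = L + R + 1 - d"
  have "length p = L + R + 1" using assms(1) unfolding injective_pattern_def by simp
  then have suffix: "suffix_sub p l = drop d p" using assms(3) by (simp add: suffix_sub_def l_def)
  show ?thesis
  proof (cases "L \<le> R")
    case True
    then have "l \<in> {L+1..L+R}" using assms(2,3) by (auto simp: l_def)
    with assms(1) True have "\<not> words_equal (prefix_sub p l) (suffix_sub p l)"
      unfolding injective_pattern_def by auto
    then show ?thesis unfolding prefix_sub_def suffix unfolding l_def .
  next
    case False
    then have "l \<in> {R+1..L+R}" using assms(2,3) by (auto simp: l_def)
    with assms(1) False have "\<not> words_equal (suffix_sub p l) (prefix_sub p l)"
      unfolding injective_pattern_def by auto
    then show ?thesis using words_equal_sym unfolding prefix_sub_def suffix unfolding l_def by blast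
  qed
qed

text \<open>Position t of the overlap is the cell n + t - L, read through p ! (d + t) by the first
  occurrence and through p ! t by the second; the centres are wildcards in both readings.\<close>
lemma overlapping_occurrences_words_equal:
  assumes len: "length p = L + R + 1" and centre: "p ! L = SX"
    and occ1: "pattern_occurs L R p c1 m" and occ2: "pattern_occurs L R p c2 n"
    and n: "n = m + int d" and "d \<le> L + R"
    and agree: "\<And>x. n - int L \<le> x \<Longrightarrow> x \<le> m + int R \<Longrightarrow> x \<noteq> m \<Longrightarrow> x \<noteq> n \<Longrightarrow> c1 x = c2 x"
  shows "words_equal (take (L + R + 1 - d) p) (drop d p)"
  unfolding words_equal_def
proof (intro conjI allI impI)
  show "length (take (L + R + 1 - d) p) = length (drop d p)" using len \<open>d \<le> L + R\<close> by simp
  fix t assume "t < length (take (L + R + 1 - d) p)"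
  then have t: "d + t < L + R + 1" using len by simp
  show "take (L + R + 1 - d) p ! t = drop d p ! t \<or> take (L + R + 1 - d) p ! t = SX \<or> drop d p ! t = SX"
  proof (cases "t = L \<or> d + t = L")
    case True
    then show ?thesis using centre t len by auto
  next
    case False
    define x where "x = n + int t - int L"
    have "sym_matches (p ! (d + t)) (c1 x)"
      using occ1 t False unfolding pattern_occurs_def x_def n by (auto simp: algebra_simps)
    moreover have "c1 x = c2 x"
      using t False by (intro agree) (auto simp: x_def n)
    moreover have "sym_matches (p ! t) (c2 x)"
      using occ2 t False unfolding pattern_occurs_def x_def by auto
    ultimately have "p ! t = p ! (d + t) \<or> p ! t = SX \<or> p ! (d + t) = SX"
      using sym_matches_same_cell by fastforce
    then show ?thesis using t len by auto
  qed
qed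

lemma injective_pattern_occurrences_apart:
  assumes ip: "injective_pattern L R p"
    and occ_a: "pattern_occurs L R p c1 a" and occ_b: "pattern_occurs L R p c2 b"
    and "a \<noteq> b" and close: "\<bar>b - a\<bar> \<le> int (max L R)"
    and agree: "\<And>x. max a b - int L \<le> x \<Longrightarrow> x \<le> min a b + int R \<Longrightarrow> x \<noteq> a \<Longrightarrow> x \<noteq> b
                     \<Longrightarrow> c1 x = c2 x"
  shows False
proof -
  have len: "length p = L + R + 1" and centre: "p ! L = SX"
    using ip unfolding injective_pattern_def by auto
  have no_overlap: False
    if "pattern_occurs L R p d1 m" "pattern_occurs L R p d2 (m + int d)" "1 \<le> d" "d \<le> max L R"
       "\<And>x. m + int d - int L \<le> x \<Longrightarrow> x \<le> m + int R \<Longrightarrow> x \<noteq> m \<Longrightarrow> x \<noteq> m + int d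
              \<Longrightarrow> d1 x = d2 x"
    for d1 d2 m d
    using overlapping_occurrences_words_equal[OF len centre that(1,2) refl] that(3-5)
      injective_pattern_no_self_overlap[OF ip that(3,4)] by auto
  show False
  proof (cases "a < b")
    case True
    with close agree show False
      by (intro no_overlap[OF occ_a, of c2 "nat (b - a)"]) (use occ_b in auto)
  next
    case False
    with \<open>a \<noteq> b\<close> close agree show False
      by (intro no_overlap[OF occ_b, of c1 "nat (a - b)"]) (use occ_a in \<open>auto simp: max_def min_def\<close>)
  qed
qed

lemma global_map_pattern_occurs_iff:
  assumes ip: "injective_pattern L R p"
  shows "pattern_occurs L R p (global_map L R p c) m \<longleftrightarrow> pattern_occurs L R p c m"
proof
  let ?c' = "global_map L R p c"
  have isolated: "\<not> pattern_occurs L R p c y"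
    if "pattern_occurs L R p c x" "y \<noteq> x" "\<bar>y - x\<bar> \<le> int (max L R)" for x y
    using injective_pattern_occurrences_apart[OF ip that(1), of c y] that by auto
  show "pattern_occurs L R p c m" if occ': "pattern_occurs L R p ?c' m"
  proof (rule ccontr)
    assume "\<not> pattern_occurs L R p c m"
    then obtain k where k: "k < L + R + 1" "k \<noteq> L"
      and mismatch: "\<not> sym_matches (p ! k) (c (m + int k - int L))"
      unfolding pattern_occurs_def by auto
    define x where "x = m + int k - int L"
    have "sym_matches (p ! k) (?c' x)" using occ' k unfolding pattern_occurs_def x_def by auto
    with mismatch have "?c' x \<noteq> c x" unfolding x_def by force
    then have occ_x: "pattern_occurs L R p c x" by (auto simp: global_map_eq split: if_splits)
    show False
    proof (rule injective_pattern_occurrences_apart[OF ip occ' occ_x])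
      show "m \<noteq> x" and "\<bar>x - m\<bar> \<le> int (max L R)" using k by (auto simp: x_def)
      fix y assume "max m x - int L \<le> y" "y \<le> min m x + int R" "y \<noteq> m" "y \<noteq> x"
      then have "\<not> pattern_occurs L R p c y" by (intro isolated[OF occ_x]) auto
      then show "?c' y = c y" by (simp add: global_map_eq)
    qed
  qed
  show "pattern_occurs L R p ?c' m" if occ: "pattern_occurs L R p c m"
    unfolding pattern_occurs_def
  proof (intro allI impI)
    fix k assume k: "k < L + R + 1" "k \<noteq> L"
    have "\<not> pattern_occurs L R p c (m + int k - int L)"
      by (rule isolated[OF occ]) (use k in auto)
    then have "?c' (m + int k - int L) = c (m + int k - int L)" by (simp add: global_map_eq)
    then show "sym_matches (p ! k) (?c' (m + int k - int L))"
      using occ k unfolding pattern_occurs_def by auto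
  qed
qed

lemma global_map_involution:
  assumes "injective_pattern L R p"
  shows "global_map L R p (global_map L R p c) = c"
proof
  fix n show "global_map L R p (global_map L R p c) n = c n"
    using global_map_pattern_occurs_iff[OF assms, of c n] by (simp add: global_map_eq)
qed

theorem theorem3p1:
  fixes L R :: nat and p :: "sym list"
  assumes "L > 0" and "R > 0" and "injective_pattern L R p"
  shows "inj (global_map L R p)"
  by (metis injI global_map_involution[OF assms(3)])

end
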